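(* In the coarse-grained calculus $\lambda^{dCG}$ (with flow-insensitive references), for all stores $\Sigma,\Sigma'$, labels $pc,pc'$, environments $\theta$ and values $v$: (i) for every expression $e$, if $\langle\Sigma,pc,e\rangle\Downarrow^{\theta}\langle\Sigma',pc',v\rangle$ (forcing semantics) then $pc\sqsubseteq pc'$; (ii) for every thunk $t$, if $\langle\Sigma,pc,t\rangle\Downarrow^{\theta}\langle\Sigma',pc',v\rangle$ (thunk semantics) then $pc\sqsubseteq pc'$.
   Context: Fix a lattice $(\mathcal{L},\sqsubseteq,\sqcup)$ of labels. $\lambda^{dCG}$ has values $v::=()\mid(x.e,\theta)\mid\mathbf{inl}(v)\mid\mathbf{inr}(v)\mid(v_1,v_2)\mid\ell\mid\mathbf{Labeled}\,\ell\,v\mid(t,\theta)\mid n_\ell$, expressions $e::=x\mid\lambda x.e\mid e_1\,e_2\mid()\mid\ell\mid(e_1,e_2)\mid\mathbf{fst}(e)\mid\mathbf{snd}(e)\mid\mathbf{inl}(e)\mid\mathbf{inr}(e)\mid\mathbf{case}(e,x.e_1,x.e_2)\mid e_1\sqsubseteq^{?}e_2\mid t$, thunks $t::=\mathbf{return}(e)\mid\mathbf{bind}(e,x.e)\mid\mathbf{unlabel}(e)\mid\mathbf{toLabeled}(e)\mid\mathbf{labelOf}(e)\mid\mathbf{getLabel}\mid\mathbf{taint}(e)\mid\mathbf{new}(e)\mid\,!e\mid e_1:=e_2\mid\mathbf{labelOfRef}(e)$; environments are finite maps from variables to values; a store maps each label to a finite list of values ($|M|$, $M[n]$, $M[n\mapsto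 v]$: length, $n$-th entry, replacement/append). Pure semantics $e\Downarrow^\theta v$: standard call-by-value environment semantics ($x\Downarrow\theta(x)$, $\lambda x.e\Downarrow(x.e,\theta)$, thunk $t\Downarrow(t,\theta)$, application of function closures $e_1e_2$: $e_1\Downarrow(x.e,\theta')$, $e_2\Downarrow v_2$, $e\Downarrow^{\theta'[x\mapsto v_2]}v$; componentwise pairs, projections, injections; case on injections binding $x$; $e_1\sqsubseteq^?e_2$ yields $\mathbf{inl}(())$ if the labels satisfy $\ell_1\sqsubseteq\ell_2$ else $\mathbf{inr}(())$). Forcing semantics: $\langle\Sigma,pc,e\rangle\Downarrow^\theta\langle\Sigma',pc',v\rangle$ iff $e\Downarrow^\theta(t,\theta')$ and $\langle\Sigma,pc,t\rangle\Downarrow^{\theta'}\langle\Sigma',pc',v\rangle$. Thunk semantics (store unchanged unless stated): $\mathbf{return}(e)$ gives $\langle\Sigma,pc,v\rangle$ if $e\Downarrow^\theta v$; $\mathbf{bind}(e_1,x.e_2)$: forcing $e_1$ gives $\langle\Sigma',pc',v_1\rangle$ and forcing $e_2$ in $\theta[x\mapsto v_1]$ from $\langle\Sigma',pc'\rangle$ gives the result; $\mathbf{toLabeled}(e)$: forcing $e$ gives $\langle\Sigma',pc',v\rangle$, result $\langle\Sigma',pc,\mathbf{Labeled}\,pc'\,v\rangle$; $\mathbf{unlabel}(e)$ with $e\Downarrow\mathbf{Labeled}\,\ell\,v$: $\langle\Sigma,pc\sqcup\ell,v\rangle$; $\mathbf{labelOf}(e)$ with $e\Downarrow\mathbf{Labeled}\,\ell\,v$: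 $\langle\Sigma,pc\sqcup\ell,\ell\rangle$; $\mathbf{getLabel}$: $\langle\Sigma,pc,pc\rangle$; $\mathbf{taint}(e)$ with $e\Downarrow\ell$: $\langle\Sigma,pc\sqcup\ell,()\rangle$; $\mathbf{new}(e)$ with $e\Downarrow\mathbf{Labeled}\,\ell\,v$, $pc\sqsubseteq\ell$, $n=|\Sigma(\ell)|$: $\langle\Sigma[\ell\mapsto\Sigma(\ell)[n\mapsto v]],pc,n_\ell\rangle$; $!e$ with $e\Downarrow n_\ell$, $\Sigma(\ell)[n]=v$: $\langle\Sigma,pc\sqcup\ell,v\rangle$; $e_1:=e_2$ with $e_1\Downarrow n_{\ell_1}$, $e_2\Downarrow\mathbf{Labeled}\,\ell_2\,v$, $\ell_2\sqsubseteq\ell_1$, $pc\sqsubseteq\ell_1$: $\langle\Sigma[\ell_1\mapsto\Sigma(\ell_1)[n\mapsto v]],pc,()\rangle$; $\mathbf{labelOfRef}(e)$ with $e\Downarrow n_\ell$: $\langle\Sigma,pc\sqcup\ell,\ell\rangle$. *)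

theory Defs
  imports Main "HOL-Library.Finite_Map"
begin

text \<open>Syntax of the coarse-grained calculus lambda-dCG, over a lattice of labels 'l
  (order \<le> plays the role of the flow relation, sup is the join).\<close>

type_synonym var = string

datatype 'l expr =
    Var var
  | Lam var "'l expr"
  | App "'l expr" "'l expr"
  | UnitE
  | LabE 'l
  | PairE "'l expr" "'l expr"
  | Fst "'l expr"
  | Snd "'l expr"
  | InlE "'l expr"
  | InrE "'l expr"
  | Case "'l expr" var "'l expr" var "'l expr"
  | LeqE "'l expr" "'l expr"
  | ThunkE "'l thunk"
and 'l thunk =
    Return "'l expr"
  | Bind "'l expr" var "'l expr"
  | Unlabel "'l expr"
  | ToLabeled "'l expr"
  | LabelOf "'l expr"
  | GetLabel
  | Taint "'l expr"
  | New "'l expr"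
  | Deref "'l expr"
  | Assign "'l expr" "'l expr"
  | LabelOfRef "'l expr"

datatype 'l val =
    UnitV
  | Clo var "'l expr" "(var, 'l val) fmap"
  | InlV "'l val"
  | InrV "'l val"
  | PairV "'l val" "'l val"
  | LabV 'l
  | Labeled 'l "'l val"
  | ThunkV "'l thunk" "(var, 'l val) fmap"
  | RefV nat 'l

type_synonym 'l env = "(var, 'l val) fmap"

type_synonym 'l store = "'l \<Rightarrow> 'l val list"

definition list_set :: "'a list \<Rightarrow> nat \<Rightarrow> 'a \<Rightarrow> 'a list" where
  "list_set M n v = (if n < length M then M[n := v] else if n = length M then M @ [v] else M)"

inductive pure_eval :: "'l::lattice env \<Rightarrow> 'l expr \<Rightarrow> 'l val \<Rightarrow> bool" where
  PVar: "fmlookup \<theta> x = Some v \<Longrightarrow> pure_eval \<theta> (Var x) v"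
| PLam: "pure_eval \<theta> (Lam x e) (Clo x e \<theta>)"
| PThunk: "pure_eval \<theta> (ThunkE t) (ThunkV t \<theta>)"
| PApp: "pure_eval \<theta> e1 (Clo x e \<theta>') \<Longrightarrow> pure_eval \<theta> e2 v2 \<Longrightarrow>
         pure_eval (fmupd x v2 \<theta>') e v \<Longrightarrow> pure_eval \<theta> (App e1 e2) v"
| PUnit: "pure_eval \<theta> UnitE UnitV"
| PLab: "pure_eval \<theta> (LabE l) (LabV l)"
| PPair: "pure_eval \<theta> e1 v1 \<Longrightarrow> pure_eval \<theta> e2 v2 \<Longrightarrow> pure_eval \<theta> (PairE e1 e2) (PairV v1 v2)"
| PFst: "pure_eval \<theta> e (PairV v1 v2) \<Longrightarrow> pure_eval \<theta> (Fst e) v1"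
| PSnd: "pure_eval \<theta> e (PairV v1 v2) \<Longrightarrow> pure_eval \<theta> (Snd e) v2"
| PInl: "pure_eval \<theta> e v \<Longrightarrow> pure_eval \<theta> (InlE e) (InlV v)"
| PInr: "pure_eval \<theta> e v \<Longrightarrow> pure_eval \<theta> (InrE e) (InrV v)"
| PCaseL: "pure_eval \<theta> e (InlV v1) \<Longrightarrow> pure_eval (fmupd x v1 \<theta>) e1 v \<Longrightarrow>
           pure_eval \<theta> (Case e x e1 y e2) v"
| PCaseR: "pure_eval \<theta> e (InrV v2) \<Longrightarrow> pure_eval (fmupd y v2 \<theta>) e2 v \<Longrightarrow>
           pure_eval \<theta> (Case e x e1 y e2) v"
| PLeqT: "pure_eval \<theta> e1 (LabV l1) \<Longrightarrow> pure_eval \<theta> e2 (LabV l2) \<Longrightarrow> l1 \<le> l2 \<Longrightarrow>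
          pure_eval \<theta> (LeqE e1 e2) (InlV UnitV)"
| PLeqF: "pure_eval \<theta> e1 (LabV l1) \<Longrightarrow> pure_eval \<theta> e2 (LabV l2) \<Longrightarrow> \<not> l1 \<le> l2 \<Longrightarrow>
          pure_eval \<theta> (LeqE e1 e2) (InrV UnitV)"

text \<open>Forcing semantics (force) and thunk semantics (tsem), mutually inductive:
  force \<theta> \<Sigma> pc e \<Sigma>' pc' v  means  <\<Sigma>,pc,e> \<Down>^\<theta> <\<Sigma>',pc',v>, and likewise for thunks.\<close>
inductive force :: "'l::lattice env \<Rightarrow> 'l store \<Rightarrow> 'l \<Rightarrow> 'l expr \<Rightarrow> 'l store \<Rightarrow> 'l \<Rightarrow> 'l val \<Rightarrow> bool"
  and tsem :: "'l::lattice env \<Rightarrow> 'l store \<Rightarrow> 'l \<Rightarrow> 'l thunk \<Rightarrow> 'l store \<Rightarrow> 'l \<Rightarrow> 'l val \<Rightarrow> bool"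
where
  Force: "pure_eval \<theta> e (ThunkV t \<theta>') \<Longrightarrow> tsem \<theta>' \<Sigma> pc t \<Sigma>' pc' v \<Longrightarrow> force \<theta> \<Sigma> pc e \<Sigma>' pc' v"
| TReturn: "pure_eval \<theta> e v \<Longrightarrow> tsem \<theta> \<Sigma> pc (Return e) \<Sigma> pc v"
| TBind: "force \<theta> \<Sigma> pc e1 \<Sigma>' pc' v1 \<Longrightarrow> force (fmupd x v1 \<theta>) \<Sigma>' pc' e2 \<Sigma>'' pc'' v \<Longrightarrow>
          tsem \<theta> \<Sigma> pc (Bind e1 x e2) \<Sigma>'' pc'' v"
| TToLabeled: "force \<theta> \<Sigma> pc e \<Sigma>' pc' v \<Longrightarrow> tsem \<theta> \<Sigma> pc (ToLabeled e) \<Sigma>' pc (Labeled pc' v)"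
| TUnlabel: "pure_eval \<theta> e (Labeled l v) \<Longrightarrow> tsem \<theta> \<Sigma> pc (Unlabel e) \<Sigma> (sup pc l) v"
| TLabelOf: "pure_eval \<theta> e (Labeled l v) \<Longrightarrow> tsem \<theta> \<Sigma> pc (LabelOf e) \<Sigma> (sup pc l) (LabV l)"
| TGetLabel: "tsem \<theta> \<Sigma> pc GetLabel \<Sigma> pc (LabV pc)"
| TTaint: "pure_eval \<theta> e (LabV l) \<Longrightarrow> tsem \<theta> \<Sigma> pc (Taint e) \<Sigma> (sup pc l) UnitV"
| TNew: "pure_eval \<theta> e (Labeled l v) \<Longrightarrow> pc \<le> l \<Longrightarrow> n = length (\<Sigma> l) \<Longrightarrow>
         tsem \<theta> \<Sigma> pc (New e) (\<Sigma>(l := list_set (\<Sigma> l) n v)) pc (RefV n l)"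
| TDeref: "pure_eval \<theta> e (RefV n l) \<Longrightarrow> n < length (\<Sigma> l) \<Longrightarrow> \<Sigma> l ! n = v \<Longrightarrow>
           tsem \<theta> \<Sigma> pc (Deref e) \<Sigma> (sup pc l) v"
| TAssign: "pure_eval \<theta> e1 (RefV n l1) \<Longrightarrow> pure_eval \<theta> e2 (Labeled l2 v) \<Longrightarrow> l2 \<le> l1 \<Longrightarrow> pc \<le> l1 \<Longrightarrow>
            tsem \<theta> \<Sigma> pc (Assign e1 e2) (\<Sigma>(l1 := list_set (\<Sigma> l1) n v)) pc UnitV"
| TLabelOfRef: "pure_eval \<theta> e (RefV n l) \<Longrightarrow> tsem \<theta> \<Sigma> pc (LabelOfRef e) \<Sigma> (sup pc l) (LabV l)"

end

theory Submission
  imports Defs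
begin

(* The program counter label only ever grows: every rule either keeps it, joins a label
   into it, or (bind) chains two evaluations; toLabeled even restores the caller's label. *)

lemma
  fixes pc :: "'l::lattice"
  shows force_pc_mono: "force \<theta> \<Sigma> pc e \<Sigma>' pc' v \<Longrightarrow> pc \<le> pc'"
    and tsem_pc_mono: "tsem \<theta> \<Sigma> pc t \<Sigma>' pc' v \<Longrightarrow> pc \<le> pc'"
proof (induction rule: force_tsem.inducts)
  case (TBind \<theta> \<Sigma> pc e1 \<Sigma>' pc' v1 x e2 \<Sigma>'' pc'' v)
  from TBind.IH show ?case by (rule order_trans)
qed auto

theorem mainTheorem8:
  fixes \<Sigma> \<Sigma>' :: "'l::lattice store" and pc pc' :: 'l and \<theta> :: "'l env" and v :: "'l val"
  shows "(\<forall>e. force \<theta> \<Sigma> pc e \<Sigma>' pc' v \<longrightarrow> pc \<le> pc')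
       \<and> (\<forall>t. tsem \<theta> \<Sigma> pc t \<Sigma>' pc' v \<longrightarrow> pc \<le> pc')"
  using force_pc_mono tsem_pc_mono by blast

end
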